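(* There is a constant $C>0$, independent of $\varepsilon$ (and of $\delta=\delta(\varepsilon)$), such that for every $\varepsilon$ and every $v\in (H_0^1(\Omega_{\varepsilon\delta}))^n$, \[ \|v\|_{(L^2(\Omega_{\varepsilon\delta}))^n}\le C\,\varepsilon\delta\,\|\nabla v\|_{(L^2(\Omega_{\varepsilon\delta}))^{n\times n}}. \]
   Context: $\Omega\subset\mathbb{R}^n$ ($n=2$ or $3$) is a bounded open set with Lipschitz boundary. $Y=]0,y_1^0[\times\cdots\times]0,y_n^0[$ and $Z=]0,z_1^0[\times\cdots\times]0,z_n^0[$; $Y_s\subset Y$ and $Z_s\subset Z$ are closed sets with non-empty interior and Lipschitz boundary; $Y^*=Y\setminus Y_s$, $Z^*=Z\setminus Z_s$. For $\varepsilon\in(0,1)$, $\delta=\delta(\varepsilon)\in(0,\varepsilon)$ with $\delta(\varepsilon)\to0$; it is assumed that $\overline Y$ is exactly covered by a finite number of cells $\delta\overline Z$ (translated by the lattice $\delta(z_1^0\mathbb{Z}\times\cdots\times z_n^0\mathbb{Z})$) and that $Y_s$ is exactly covered by a finite number of such cells, so that $Y_s$ does not meet the translated obstacles $\delta(\ell z^0+Z_s)$ lying in $Y^*$; for simplicity $\overline\Omega$ is exactly covered by a finite number of cells $\varepsilon\overline Y$. The characteristic functions $\chi_{Y^*}$, $\chi_{Z^*}$ are extended periodically (periods $y_i^0$, resp. $z_i^0$, in the $i$-th variable), and \[ \Omega_{\varepsilon\delta}=\{x\in\Omega:\ \chi_{Y^*}(x/\varepsilon)\,\chi_{Z^*}(x/(\varepsilon\delta))=1\},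 \] a connected domain with obstacles of size $\varepsilon$ and of size $\varepsilon\delta$. *)

theory Defs
  imports "HOL-Analysis.Analysis"
begin

definition lat :: "('n::finite \<Rightarrow> int) \<Rightarrow> real^'n \<Rightarrow> real^'n" where
  "lat k p = (\<chi> i. real_of_int (k i) * p $ i)"

definition cellset :: "real \<Rightarrow> ('n::finite \<Rightarrow> int) \<Rightarrow> real^'n \<Rightarrow> (real^'n) set \<Rightarrow> (real^'n) set" where
  "cellset s k p A = (\<lambda>a. s *\<^sub>R (lat k p + a)) ` A"

definition lipschitz_boundary :: "(real^'n::finite) set \<Rightarrow> bool" where
  "lipschitz_boundary U \<longleftrightarrow>
     (\<forall>p\<in>frontier U. \<exists>r>0. \<exists>e L g. norm e = 1 \<and>
        L-lipschitz_on {x. x \<bullet> e = 0} (g :: real^'n \<Rightarrow> real) \<and>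
        U \<inter> ball p r = {x \<in> ball p r. x \<bullet> e < g (x - (x \<bullet> e) *\<^sub>R e)})"

definition closed_lipschitz :: "(real^'n::finite) set \<Rightarrow> bool" where
  "closed_lipschitz K \<longleftrightarrow> closed K \<and> interior K \<noteq> {} \<and> K = closure (interior K)
     \<and> lipschitz_boundary (interior K)"

definition perforated ::
  "(real^'n::finite) set \<Rightarrow> real^'n \<Rightarrow> (real^'n) set \<Rightarrow> real^'n \<Rightarrow> (real^'n) set \<Rightarrow> real \<Rightarrow> real \<Rightarrow> (real^'n) set" where
  "perforated \<Omega> y0 Ys z0 Zs \<epsilon> \<delta> =
     \<Omega> - (\<Union>k. cellset \<epsilon> k y0 Ys) - (\<Union>l. cellset (\<epsilon> * \<delta>) l z0 Zs)"

text \<open>Vector-valued C^1 test functions with compact support in U, with Jacobian J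
  (J x $ i $ j = partial derivative of component i w.r.t. variable j).\<close>
definition C1c_test :: "(real^'n::finite) set \<Rightarrow> (real^'n \<Rightarrow> real^'n) \<Rightarrow> (real^'n \<Rightarrow> real^'n^'n) \<Rightarrow> bool" where
  "C1c_test U \<phi> J \<longleftrightarrow>
     (\<forall>x. (\<phi> has_derivative (\<lambda>h. J x *v h)) (at x)) \<and> continuous_on UNIV J \<and>
     (\<exists>K. compact K \<and> K \<subseteq> U \<and> (\<forall>x. x \<notin> K \<longrightarrow> \<phi> x = 0))"

text \<open>v \<in> (H_0^1(U))^n with (weak) gradient G: v, G are measurable and v is the
  H^1(U)-limit of C^1 functions compactly supported in U (H_0^1 as the closure of
  the test functions in the H^1 norm).\<close>
definition H01 :: "(real^'n::finite) set \<Rightarrow> (real^'n \<Rightarrow> real^'n) \<Rightarrow> (real^'n \<Rightarrow> real^'n^'n) \<Rightarrow> bool" where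
  "H01 U v G \<longleftrightarrow>
     v \<in> borel_measurable (lebesgue_on U) \<and> G \<in> borel_measurable (lebesgue_on U) \<and>
     (\<exists>\<phi> J. (\<forall>k. C1c_test U (\<phi> k) (J k)) \<and>
        (\<lambda>k. \<integral>\<^sup>+ x. ennreal ((norm (\<phi> k x - v x))\<^sup>2) \<partial>(lebesgue_on U)) \<longlonglongrightarrow> 0 \<and>
        (\<lambda>k. \<integral>\<^sup>+ x. ennreal ((norm (J k x - G x))\<^sup>2) \<partial>(lebesgue_on U)) \<longlonglongrightarrow> 0)"

definition L2norm :: "('a::euclidean_space) set \<Rightarrow> ('a \<Rightarrow> 'b::real_normed_vector) \<Rightarrow> real" where
  "L2norm U f = sqrt (\<integral>x. (norm (f x))\<^sup>2 \<partial>(lebesgue_on U))"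

end

theory Submission
  imports Defs
begin

text \<open>Write \<open>h = \<epsilon>\<delta>\<close> and pick a box \<open>[a, b]\<close> inside \<open>Z\<^sub>s\<close>. Every function of
  \<open>H\<^sub>0\<^sup>1\<close> of the perforated domain vanishes on the \<open>h\<close>-periodic array of holes
  \<open>h (l z\<^sup>0 + [a, b])\<close>, and every point \<open>x\<close> has such a hole inside \<open>x + [-h z\<^sup>0, h z\<^sup>0]\<close>.
  Hence \<open>|\<phi>(x)|\<^sup>2\<close> is controlled by the average of \<open>|\<phi>(x + w) - \<phi>(x)|\<^sup>2\<close> over the
  displacements \<open>w\<close> in that box, and integrating the segment estimate
  \<open>|\<phi>(x + w) - \<phi>(x)|\<^sup>2 \<le> |w|\<^sup>2 \<integral>\<^sub>0\<^sup>1 |\<nabla>\<phi>(x + t w)|\<^sup>2 dt\<close> over \<open>x\<close> (Fubini, translation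
  invariance) gives \<open>\<parallel>\<phi>\<parallel>\<^sup>2 \<le> K h\<^sup>2 \<parallel>\<nabla>\<phi>\<parallel>\<^sup>2\<close> for test functions, with \<open>K\<close> depending only on
  \<open>z\<^sup>0, a, b\<close>. The inequality passes to \<open>H\<^sub>0\<^sup>1\<close> by density.\<close>

lemma norm_matrix_vector_mult_le:
  fixes A :: "real^'n^'m"
  shows "norm (A *v x) \<le> norm A * norm x"
proof -
  have row: "\<bar>(A *v x) $ i\<bar> \<le> norm (A $ i) * norm x" for i
  proof -
    have "(A *v x) $ i = A $ i \<bullet> x" by (simp add: matrix_vector_mult_def inner_vec_def)
    then show ?thesis using Cauchy_Schwarz_ineq2 by simp
  qed
  have "(norm (A *v x))\<^sup>2 = (\<Sum>i\<in>UNIV. ((A *v x) $ i)\<^sup>2)"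
    by (simp add: norm_vec_def L2_set_def sum_nonneg)
  also have "\<dots> \<le> (\<Sum>i\<in>UNIV. (norm (A $ i))\<^sup>2 * (norm x)\<^sup>2)"
    by (intro sum_mono) (metis row abs_ge_zero power_mono power_mult_distrib power2_abs)
  also have "\<dots> = (norm A * norm x)\<^sup>2"
    by (simp add: norm_vec_def L2_set_def sum_distrib_right sum_nonneg power_mult_distrib)
  finally show ?thesis by (meson norm_ge_zero power2_le_imp_le mult_nonneg_nonneg)
qed

lemma square_integral_le_integral_square_01:
  fixes f :: "real \<Rightarrow> real"
  assumes "continuous_on {0..1} f"
  shows "(integral {0..1} f)\<^sup>2 \<le> integral {0..1} (\<lambda>t. (f t)\<^sup>2)"
proof -
  define m where "m = integral {0..1} f"
  have f: "f integrable_on {0..1}" using assms integrable_continuous_interval by blast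
  have f2: "(\<lambda>t. (f t)\<^sup>2) integrable_on {0..1}"
    by (intro integrable_continuous_interval continuous_intros assms)
  have mf: "(\<lambda>t. (2*m) * f t) integrable_on {0..1}" using integrable_on_cmult_left[OF f] by simp
  \<comment> \<open>the variance of \<open>f\<close> on the unit interval is nonnegative\<close>
  have "0 \<le> integral {0..1} (\<lambda>t. (f t - m)\<^sup>2)"
    by (rule integral_nonneg) (intro integrable_continuous_interval continuous_intros assms, simp)
  also have "(\<lambda>t. (f t - m)\<^sup>2) = (\<lambda>t. ((f t)\<^sup>2 - (2*m) * f t) + m\<^sup>2)"
    by (simp add: power2_eq_square algebra_simps)
  also have "integral {0..1} \<dots> = integral {0..1} (\<lambda>t. (f t)\<^sup>2 - (2*m) * f t) + m\<^sup>2"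
    using integral_add[OF integrable_diff[OF f2 mf] integrable_const_ivl[of "m\<^sup>2" 0 1]] by simp
  also have "\<dots> = integral {0..1} (\<lambda>t. (f t)\<^sup>2) - (2*m) * m + m\<^sup>2"
    using integral_diff[OF f2 mf] by (simp add: m_def)
  finally show ?thesis by (simp add: m_def power2_eq_square)
qed

lemma norm_diff_square_le_segment_integral:
  fixes \<phi> :: "real^'n \<Rightarrow> real^'m" and J :: "real^'n \<Rightarrow> real^'n^'m"
  assumes deriv: "\<And>x. (\<phi> has_derivative (\<lambda>h. J x *v h)) (at x)" and cont: "continuous_on UNIV J"
  shows "(norm (\<phi> (x + w) - \<phi> x))\<^sup>2 \<le> (norm w)\<^sup>2 * integral {0..1} (\<lambda>t. (norm (J (x + t *\<^sub>R w)))\<^sup>2)"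
proof -
  define g where "g t = \<phi> (x + t *\<^sub>R w)" for t :: real
  define f where "f t = norm (J (x + t *\<^sub>R w))" for t
  have g': "(g has_vector_derivative (J (x + t *\<^sub>R w) *v w)) (at t)" for t
  proof -
    have "((\<phi> \<circ> (\<lambda>t. x + t *\<^sub>R w)) has_derivative ((\<lambda>h. J (x + t *\<^sub>R w) *v h) \<circ> (\<lambda>s. s *\<^sub>R w))) (at t)"
      by (rule diff_chain_at[OF _ deriv]) (auto intro!: derivative_eq_intros)
    then show ?thesis
      unfolding has_vector_derivative_def g_def by (simp add: o_def matrix_vector_mult_scaleR)
  qed
  have cont_segment: "continuous_on S (\<lambda>t::real. J (x + t *\<^sub>R w))" for S
    by (rule continuous_on_compose2[OF cont]) (auto intro!: continuous_intros)
  then have f_cont: "continuous_on S f" for S unfolding f_def by (intro continuous_intros)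
  have ftc: "((\<lambda>t. J (x + t *\<^sub>R w) *v w) has_integral (g 1 - g 0)) {0..1}"
    by (rule fundamental_theorem_of_calculus) (auto intro: has_vector_derivative_at_within g')
  have "norm (integral {0..1} (\<lambda>t. J (x + t *\<^sub>R w) *v w)) \<le> integral {0..1} (\<lambda>t. f t * norm w)"
    by (rule integral_norm_bound_integral[OF has_integral_integrable[OF ftc]])
      (auto simp: f_def intro!: norm_matrix_vector_mult_le integrable_continuous_interval
        continuous_intros cont_segment)
  then have "norm (g 1 - g 0) \<le> integral {0..1} f * norm w"
    using ftc by (simp add: integral_unique)
  moreover have "0 \<le> integral {0..1} f"
    by (rule integral_nonneg) (auto simp: f_def intro: integrable_continuous_interval f_cont)
  ultimately have "(norm (g 1 - g 0))\<^sup>2 \<le> (integral {0..1} f)\<^sup>2 * (norm w)\<^sup>2"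
    by (simp add: power_mono flip: power_mult_distrib)
  also have "\<dots> \<le> integral {0..1} (\<lambda>t. (f t)\<^sup>2) * (norm w)\<^sup>2"
    by (intro mult_right_mono square_integral_le_integral_square_01 f_cont) simp
  finally show ?thesis by (simp add: g_def f_def mult.commute)
qed

lemma norm_diff_square_le_segment_nn_integral:
  fixes \<phi> :: "real^'n \<Rightarrow> real^'m" and J :: "real^'n \<Rightarrow> real^'n^'m"
  assumes deriv: "\<And>x. (\<phi> has_derivative (\<lambda>h. J x *v h)) (at x)" and cont: "continuous_on UNIV J"
  shows "ennreal ((norm (\<phi> (x + w) - \<phi> x))\<^sup>2) \<le> ennreal ((norm w)\<^sup>2) *
     (\<integral>\<^sup>+t. ennreal (indicator {0..1} t * (norm (J (x + t *\<^sub>R w)))\<^sup>2) \<partial>lborel)"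
proof -
  define f where "f t = (norm (J (x + t *\<^sub>R w)))\<^sup>2" for t
  have f_cont: "continuous_on S f" for S
    unfolding f_def by (intro continuous_intros continuous_on_compose2[OF cont]) auto
  have "(f has_integral integral {0..1} f) {0..1}"
    by (intro integrable_integral integrable_continuous_interval f_cont)
  moreover have "(\<lambda>t. indicator {0..1} t * f t) = (\<lambda>t. if t \<in> {0..1} then f t else 0)"
    by (auto simp: indicator_def)
  ultimately have restrict: "((\<lambda>t. indicator {0..1} t * f t) has_integral integral {0..1} f) UNIV"
    by (simp only: has_integral_restrict_UNIV)
  have "(\<integral>\<^sup>+t. ennreal (indicator {0..1} t * f t) \<partial>lborel) = ennreal (integral {0..1} f)"
  proof (rule nn_integral_has_integral_lborel[OF _ _ restrict])
    have [measurable]: "f \<in> borel_measurable borel" by (rule borel_measurable_continuous_onI[OF f_cont])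
    show "(\<lambda>t. indicator {0..1} t * f t) \<in> borel_measurable borel" by measurable
  qed (simp add: f_def)
  with norm_diff_square_le_segment_integral[OF deriv cont, of x w] show ?thesis
    unfolding f_def[abs_def] by (simp add: ennreal_leI flip: ennreal_mult')
qed

lemma nn_integral_lborel_translate:
  fixes f :: "'a::euclidean_space \<Rightarrow> ennreal"
  assumes [measurable]: "f \<in> borel_measurable borel"
  shows "(\<integral>\<^sup>+x. f (c + x) \<partial>lborel) = (\<integral>\<^sup>+x. f x \<partial>lborel)"
  by (subst lborel_distr_plus[symmetric, of c]) (simp add: nn_integral_distr)

lemma nn_integral_norm_diff_translate_le:
  fixes \<phi> :: "real^'n \<Rightarrow> real^'m" and J :: "real^'n \<Rightarrow> real^'n^'m"
  assumes deriv: "\<And>x. (\<phi> has_derivative (\<lambda>h. J x *v h)) (at x)" and cont: "continuous_on UNIV J"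
  shows "(\<integral>\<^sup>+x. ennreal ((norm (\<phi> (x + w) - \<phi> x))\<^sup>2) \<partial>lborel)
     \<le> ennreal ((norm w)\<^sup>2) * (\<integral>\<^sup>+x. ennreal ((norm (J x))\<^sup>2) \<partial>lborel)"
proof -
  have [measurable]: "J \<in> borel_measurable borel" by (rule borel_measurable_continuous_onI[OF cont])
  define F where "F x t = ennreal (indicator {0..1} t * (norm (J (x + t *\<^sub>R w)))\<^sup>2)" for x and t :: real
  have F_meas: "case_prod F \<in> borel_measurable (lborel \<Otimes>\<^sub>M lborel)"
    unfolding F_def by measurable
  have F_slice: "(\<integral>\<^sup>+x. F x t \<partial>lborel) = indicator {0..1} t * (\<integral>\<^sup>+x. ennreal ((norm (J x))\<^sup>2) \<partial>lborel)"
    for t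
  proof -
    have "(\<integral>\<^sup>+x. F x t \<partial>lborel)
        = (\<integral>\<^sup>+x. indicator {0..1} t * ennreal ((norm (J (t *\<^sub>R w + x)))\<^sup>2) \<partial>lborel)"
      unfolding F_def by (intro nn_integral_cong) (auto simp: indicator_def add.commute)
    also have "\<dots> = indicator {0..1} t * (\<integral>\<^sup>+x. ennreal ((norm (J (t *\<^sub>R w + x)))\<^sup>2) \<partial>lborel)"
      by (rule nn_integral_cmult) measurable
    finally show ?thesis
      by (simp add: nn_integral_lborel_translate[of "\<lambda>x. ennreal ((norm (J x))\<^sup>2)"])
  qed
  have "(\<integral>\<^sup>+x. ennreal ((norm (\<phi> (x + w) - \<phi> x))\<^sup>2) \<partial>lborel)
      \<le> (\<integral>\<^sup>+x. ennreal ((norm w)\<^sup>2) * (\<integral>\<^sup>+t. F x t \<partial>lborel) \<partial>lborel)"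
    unfolding F_def by (intro nn_integral_mono norm_diff_square_le_segment_nn_integral[OF deriv cont])
  also have "\<dots> = ennreal ((norm w)\<^sup>2) * (\<integral>\<^sup>+t. (\<integral>\<^sup>+x. F x t \<partial>lborel) \<partial>lborel)"
  proof -
    have "(\<lambda>x. \<integral>\<^sup>+t. F x t \<partial>lborel) \<in> borel_measurable lborel"
      using F_meas unfolding F_def by measurable
    then show ?thesis
      by (simp add: nn_integral_cmult lborel_pair.Fubini'[OF F_meas])
  qed
  also have "\<dots> = ennreal ((norm w)\<^sup>2) * (\<integral>\<^sup>+x. ennreal ((norm (J x))\<^sup>2) \<partial>lborel)"
    by (simp add: F_slice nn_integral_multc mult.commute)
  finally show ?thesis .
qed

text \<open>Since \<open>\<phi>(x + w) = 0\<close> on \<open>S\<close>, \<open>m |\<phi>(x)|\<^sup>2 \<le> \<integral>\<^sub>W |\<phi>(x + w) - \<phi>(x)|\<^sup>2 dw\<close>; integrate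
  over \<open>x\<close> and exchange the integrals.\<close>
lemma poincare_vanishing_on_translates:
  fixes \<phi> :: "real^'n \<Rightarrow> real^'m" and J :: "real^'n \<Rightarrow> real^'n^'m"
  assumes deriv: "\<And>x. (\<phi> has_derivative (\<lambda>h. J x *v h)) (at x)" and cont: "continuous_on UNIV J"
    and W: "W \<in> sets lborel" and W_bounded: "\<And>w. w \<in> W \<Longrightarrow> norm w \<le> R"
    and vanish: "\<And>x. \<exists>S \<in> sets lborel. S \<subseteq> W \<and> m \<le> emeasure lborel S \<and> (\<forall>w\<in>S. \<phi> (x + w) = 0)"
  shows "m * (\<integral>\<^sup>+x. ennreal ((norm (\<phi> x))\<^sup>2) \<partial>lborel)
     \<le> emeasure lborel W * ennreal (R\<^sup>2) * (\<integral>\<^sup>+x. ennreal ((norm (J x))\<^sup>2) \<partial>lborel)"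
proof -
  have "continuous_on UNIV \<phi>"
    using deriv has_derivative_continuous continuous_at_imp_continuous_on by blast
  then have [measurable]: "\<phi> \<in> borel_measurable borel" by (rule borel_measurable_continuous_onI)
  have [measurable]: "W \<in> sets borel" using W by simp
  define D where "D x w = indicator W w * ennreal ((norm (\<phi> (x + w) - \<phi> x))\<^sup>2)" for x w
  have D_meas: "case_prod D \<in> borel_measurable (lborel \<Otimes>\<^sub>M lborel)"
    unfolding D_def by measurable
  have pointwise: "m * ennreal ((norm (\<phi> x))\<^sup>2) \<le> (\<integral>\<^sup>+w. D x w \<partial>lborel)" for x
  proof -
    obtain S where S: "S \<in> sets lborel" "S \<subseteq> W" "m \<le> emeasure lborel S" "\<forall>w\<in>S. \<phi> (x + w) = 0"
      using vanish[of x] by blast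
    have "m * ennreal ((norm (\<phi> x))\<^sup>2) \<le> emeasure lborel S * ennreal ((norm (\<phi> x))\<^sup>2)"
      using S(3) by (rule mult_right_mono) simp
    also have "\<dots> = (\<integral>\<^sup>+w. ennreal ((norm (\<phi> x))\<^sup>2) * indicator S w \<partial>lborel)"
      by (subst nn_integral_cmult_indicator[OF S(1)]) (simp add: mult.commute)
    also have "\<dots> \<le> (\<integral>\<^sup>+w. D x w \<partial>lborel)"
      using S(2,4) by (intro nn_integral_mono) (auto simp: D_def indicator_def)
    finally show ?thesis .
  qed
  have slice: "(\<integral>\<^sup>+x. D x w \<partial>lborel)
      \<le> (ennreal (R\<^sup>2) * (\<integral>\<^sup>+x. ennreal ((norm (J x))\<^sup>2) \<partial>lborel)) * indicator W w" for w
  proof (cases "w \<in> W")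
    case True
    have "(\<integral>\<^sup>+x. D x w \<partial>lborel) = (\<integral>\<^sup>+x. ennreal ((norm (\<phi> (x + w) - \<phi> x))\<^sup>2) \<partial>lborel)"
      using True by (simp add: D_def)
    also have "\<dots> \<le> ennreal ((norm w)\<^sup>2) * (\<integral>\<^sup>+x. ennreal ((norm (J x))\<^sup>2) \<partial>lborel)"
      by (rule nn_integral_norm_diff_translate_le[OF deriv cont])
    also have "\<dots> \<le> ennreal (R\<^sup>2) * (\<integral>\<^sup>+x. ennreal ((norm (J x))\<^sup>2) \<partial>lborel)"
      using W_bounded[OF True] by (intro mult_right_mono ennreal_leI power_mono) auto
    finally show ?thesis using True by simp
  qed (simp add: D_def)
  have "m * (\<integral>\<^sup>+x. ennreal ((norm (\<phi> x))\<^sup>2) \<partial>lborel) = (\<integral>\<^sup>+x. m * ennreal ((norm (\<phi> x))\<^sup>2) \<partial>lborel)"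
    by (rule nn_integral_cmult[symmetric]) measurable
  also have "\<dots> \<le> (\<integral>\<^sup>+x. (\<integral>\<^sup>+w. D x w \<partial>lborel) \<partial>lborel)"
    by (intro nn_integral_mono pointwise)
  also have "\<dots> = (\<integral>\<^sup>+w. (\<integral>\<^sup>+x. D x w \<partial>lborel) \<partial>lborel)"
    by (rule lborel_pair.Fubini'[OF D_meas, symmetric])
  also have "\<dots> \<le> (\<integral>\<^sup>+w. (ennreal (R\<^sup>2) * (\<integral>\<^sup>+x. ennreal ((norm (J x))\<^sup>2) \<partial>lborel)) * indicator W w \<partial>lborel)"
    by (intro nn_integral_mono slice)
  also have "\<dots> = emeasure lborel W * ennreal (R\<^sup>2) * (\<integral>\<^sup>+x. ennreal ((norm (J x))\<^sup>2) \<partial>lborel)"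
    by (subst nn_integral_cmult_indicator[OF W]) (simp add: mult_ac)
  finally show ?thesis .
qed

lemma emeasure_lborel_cbox_cart:
  fixes a b :: "real^'n"
  assumes "\<And>i. a$i \<le> b$i"
  shows "emeasure lborel (cbox a b) = ennreal (\<Prod>i\<in>UNIV. b$i - a$i)"
proof -
  have "a \<in> cbox a b" using assms by (simp add: mem_box_cart)
  then have "cbox a b \<noteq> {}" by blast
  then have "emeasure lborel (cbox a b) = ennreal (Henstock_Kurzweil_Integration.content (cbox a b))"
    by (simp only: emeasure_lborel_cbox_eq content_cbox_if) (simp add: box_ne_empty inner_diff_left)
  with \<open>cbox a b \<noteq> {}\<close> show ?thesis by (simp add: content_cbox_cart)
qed

lemma cellset_cbox:
  assumes "0 < h"
  shows "cellset h l p (cbox a b) = cbox (h *\<^sub>R (lat l p + a)) (h *\<^sub>R (lat l p + b))"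
proof -
  have "cellset h l p (cbox a b) = (\<lambda>x. h *\<^sub>R x + h *\<^sub>R lat l p) ` cbox a b"
    unfolding cellset_def by (simp add: algebra_simps)
  also have "\<dots> = cbox (h *\<^sub>R (lat l p + a)) (h *\<^sub>R (lat l p + b))"
  proof (cases "\<forall>i. a$i \<le> b$i")
    case True
    then have "a \<in> cbox a b" by (simp add: mem_box_cart)
    then show ?thesis using assms by (auto simp: image_affinity_cbox algebra_simps)
  next
    case False
    then obtain i where i: "b$i < a$i" by (auto simp: not_le)
    then have "cbox a b = {}" by (auto simp: mem_box_cart dest!: spec[of _ i])
    moreover have "cbox (h *\<^sub>R (lat l p + a)) (h *\<^sub>R (lat l p + b)) = {}"
    proof -
      have "h * b$i < h * a$i" using i assms by simp
      then show ?thesis by (auto simp: mem_box_cart algebra_simps dest!: spec[of _ i])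
    qed
    ultimately show ?thesis by simp
  qed
  finally show ?thesis .
qed

lemma periodic_cell_near:
  fixes x p a b :: "real^'n"
  assumes h: "0 < h" and a: "\<And>i. 0 \<le> a$i" and ab: "\<And>i. a$i < b$i" and b: "\<And>i. b$i \<le> p$i"
  obtains l S where "S \<in> sets lborel" "S \<subseteq> cbox (- (h *\<^sub>R p)) (h *\<^sub>R p)"
    "emeasure lborel S = ennreal (h ^ CARD('n) * (\<Prod>i\<in>UNIV. b$i - a$i))"
    "\<And>w. w \<in> S \<Longrightarrow> x + w \<in> cellset h l p (cbox a b)"
proof
  have p: "0 < p$i" for i using a[of i] ab[of i] b[of i] by linarith
  define l where "l i = \<lfloor>x$i / (h * p$i)\<rfloor>" for i
  define S where "S = cbox (h *\<^sub>R (lat l p + a) - x) (h *\<^sub>R (lat l p + b) - x)"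
  have lower: "real_of_int (l i) * (h * p$i) \<le> x$i" and upper: "x$i < (real_of_int (l i) + 1) * (h * p$i)"
    for i unfolding l_def using h p[of i] by (auto intro: floor_divide_lower floor_divide_upper)
  show "S \<subseteq> cbox (- (h *\<^sub>R p)) (h *\<^sub>R p)"
  proof (clarsimp simp: S_def mem_box_cart lat_def)
    fix y i
    assume "\<forall>i. h * (real_of_int (l i) * p$i + a$i) - x$i \<le> y$i \<and> y$i \<le> h * (real_of_int (l i) * p$i + b$i) - x$i"
    then have y: "h * (real_of_int (l i) * p$i + a$i) - x$i \<le> y$i" "y$i \<le> h * (real_of_int (l i) * p$i + b$i) - x$i"
      by auto
    have "0 \<le> h * a$i" "h * b$i \<le> h * p$i" using h a[of i] b[of i] by auto
    with y lower[of i] upper[of i] show "- (h * p$i) \<le> y$i \<and> y$i \<le> h * p$i"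
      by (simp add: algebra_simps)
  qed
  have "emeasure lborel S = ennreal (\<Prod>i\<in>UNIV. h * (b$i - a$i))"
    unfolding S_def using h ab by (subst emeasure_lborel_cbox_cart) (auto simp: algebra_simps less_imp_le)
  then show "emeasure lborel S = ennreal (h ^ CARD('n) * (\<Prod>i\<in>UNIV. b$i - a$i))"
    by (simp add: prod.distrib)
  show "x + w \<in> cellset h l p (cbox a b)" if "w \<in> S" for w
    using that unfolding S_def cellset_cbox[OF h]
    by (metis add.commute cbox_translation diff_add_cancel imageI)
  show "S \<in> sets lborel" by (simp add: S_def)
qed

text \<open>The displacements \<open>W = [-h p, h p]\<close> have measure \<open>h\<^sup>n \<Prod> 2 p\<^sub>i\<close> and norm at most
  \<open>h \<Sum> p\<^sub>i\<close>, while each hole \<open>h (l p + [a, b])\<close> has measure \<open>h\<^sup>n \<Prod> (b\<^sub>i - a\<^sub>i)\<close>.\<close>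
definition periodic_poincare_constant :: "real^'n \<Rightarrow> real^'n \<Rightarrow> real^'n \<Rightarrow> real" where
  "periodic_poincare_constant p a b = (\<Prod>i\<in>UNIV. 2 * p$i) * (\<Sum>i\<in>UNIV. p$i)\<^sup>2 / (\<Prod>i\<in>UNIV. b$i - a$i)"

lemma periodic_poincare_constant_pos:
  assumes "\<And>i. 0 < p$i" "\<And>i. a$i < b$i"
  shows "0 < periodic_poincare_constant p a b"
  unfolding periodic_poincare_constant_def using assms
  by (intro divide_pos_pos mult_pos_pos prod_pos sum_pos zero_less_power) auto

lemma poincare_vanishing_on_periodic_cells:
  fixes \<phi> :: "real^'n \<Rightarrow> real^'m" and J :: "real^'n \<Rightarrow> real^'n^'m" and a b p :: "real^'n"
  assumes deriv: "\<And>x. (\<phi> has_derivative (\<lambda>h. J x *v h)) (at x)" and cont: "continuous_on UNIV J"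
    and h: "0 < h" and a: "\<And>i. 0 \<le> a$i" and ab: "\<And>i. a$i < b$i" and b: "\<And>i. b$i \<le> p$i"
    and vanish: "\<And>l y. y \<in> cellset h l p (cbox a b) \<Longrightarrow> \<phi> y = 0"
  shows "(\<integral>\<^sup>+x. ennreal ((norm (\<phi> x))\<^sup>2) \<partial>lborel)
     \<le> ennreal (periodic_poincare_constant p a b * h\<^sup>2) * (\<integral>\<^sup>+x. ennreal ((norm (J x))\<^sup>2) \<partial>lborel)"
proof -
  have p: "0 < p$i" for i using a[of i] ab[of i] b[of i] by linarith
  define W where "W = cbox (- (h *\<^sub>R p)) (h *\<^sub>R p)"
  define R where "R = h * (\<Sum>i\<in>UNIV. p$i)"
  define m where "m = h ^ CARD('n) * (\<Prod>i\<in>UNIV. b$i - a$i)"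
  have m: "0 < m" unfolding m_def using h ab by (simp add: prod_pos)
  have W_measure: "emeasure lborel W = ennreal (h ^ CARD('n) * (\<Prod>i\<in>UNIV. 2 * p$i))"
    unfolding W_def using h p
    by (subst emeasure_lborel_cbox_cart) (auto simp: less_imp_le prod.distrib mult_ac)
  have W_bounded: "norm w \<le> R" if "w \<in> W" for w
  proof -
    have "\<bar>w$i\<bar> \<le> h * p$i" for i
      using that[unfolded W_def mem_box_cart, rule_format, of i] by (auto simp: abs_le_iff)
    then have "(\<Sum>i\<in>UNIV. \<bar>w$i\<bar>) \<le> R" unfolding R_def sum_distrib_left by (rule sum_mono)
    then show ?thesis using norm_le_l1_cart[of w] by linarith
  qed
  have holes: "\<exists>S \<in> sets lborel. S \<subseteq> W \<and> ennreal m \<le> emeasure lborel S \<and> (\<forall>w\<in>S. \<phi> (x + w) = 0)" for x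
  proof -
    obtain S l where S: "S \<in> sets lborel" "S \<subseteq> W" "emeasure lborel S = ennreal m"
      and cell: "\<And>w. w \<in> S \<Longrightarrow> x + w \<in> cellset h l p (cbox a b)"
      unfolding W_def m_def by (rule periodic_cell_near[OF h a ab b, of x]) fast
    have "\<forall>w\<in>S. \<phi> (x + w) = 0" using cell vanish by blast
    with S show ?thesis by (intro bexI[of _ S]) simp_all
  qed
  have "ennreal m * (\<integral>\<^sup>+x. ennreal ((norm (\<phi> x))\<^sup>2) \<partial>lborel)
     \<le> emeasure lborel W * ennreal (R\<^sup>2) * (\<integral>\<^sup>+x. ennreal ((norm (J x))\<^sup>2) \<partial>lborel)"
    by (rule poincare_vanishing_on_translates[OF deriv cont _ W_bounded holes]) (simp add: W_def)
  also have "emeasure lborel W * ennreal (R\<^sup>2) = ennreal m * ennreal (periodic_poincare_constant p a b * h\<^sup>2)"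
  proof -
    have "h ^ CARD('n) * (\<Prod>i\<in>UNIV. 2 * p$i) * R\<^sup>2 = m * (periodic_poincare_constant p a b * h\<^sup>2)"
      using ab unfolding m_def R_def periodic_poincare_constant_def
      by (simp add: field_simps power2_eq_square less_imp_neq[symmetric])
    moreover have "0 \<le> h ^ CARD('n) * (\<Prod>i\<in>UNIV. 2 * p$i)"
      using h p by (simp add: prod_nonneg less_imp_le)
    ultimately show ?thesis
      using m unfolding W_measure by (metis ennreal_mult' less_imp_le zero_le_power2)
  qed
  finally show ?thesis
    using m by (simp add: mult.assoc ennreal_mult_le_mult_iff)
qed

lemma has_derivative_matrix_eq_0_outside_closed:
  fixes \<phi> :: "real^'n \<Rightarrow> real^'m"
  assumes deriv: "(\<phi> has_derivative (\<lambda>h. J *v h)) (at x)" and K: "closed K" "x \<notin> K"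
    and vanish: "\<And>y. y \<notin> K \<Longrightarrow> \<phi> y = 0"
  shows "J = 0"
proof -
  have "(\<phi> has_derivative (\<lambda>h. 0)) (at x)"
    by (rule has_derivative_transform_within_open[where f="\<lambda>_. 0" and s="- K"]) (use K vanish in auto)
  then have "(\<lambda>h. J *v h) = (\<lambda>h. 0)" by (rule has_derivative_unique[OF deriv])
  then show ?thesis by (simp add: matrix_eq fun_eq_iff)
qed

lemma C1c_test_support:
  assumes "C1c_test U \<phi> J"
  obtains K where "compact K" "K \<subseteq> U" "\<And>x. x \<notin> K \<Longrightarrow> \<phi> x = 0" "\<And>x. x \<notin> K \<Longrightarrow> J x = 0"
proof -
  obtain K where K: "compact K" "K \<subseteq> U" and vanish: "\<And>x. x \<notin> K \<Longrightarrow> \<phi> x = 0"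
    using assms unfolding C1c_test_def by blast
  have "J x = 0" if "x \<notin> K" for x
  proof (rule has_derivative_matrix_eq_0_outside_closed[OF _ compact_imp_closed[OF K(1)] that vanish])
    show "(\<phi> has_derivative (\<lambda>h. J x *v h)) (at x)" using assms unfolding C1c_test_def by blast
  qed
  with K vanish that show ?thesis by blast
qed

lemma C1c_test_continuous:
  assumes "C1c_test U \<phi> J"
  shows "continuous_on UNIV \<phi>" "continuous_on UNIV J"
proof -
  have "isCont \<phi> x" for x using assms has_derivative_continuous unfolding C1c_test_def by blast
  then show "continuous_on UNIV \<phi>" by (simp add: continuous_at_imp_continuous_on)
  show "continuous_on UNIV J" using assms unfolding C1c_test_def by blast
qed

lemma C1c_test_measurable:
  assumes "C1c_test U \<phi> J" "U \<in> sets lebesgue"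
  shows "\<phi> \<in> borel_measurable (lebesgue_on U)" "J \<in> borel_measurable (lebesgue_on U)"
  using C1c_test_continuous[OF assms(1)]
  by (auto intro: continuous_imp_measurable_on_sets_lebesgue[OF continuous_on_subset assms(2)])

lemma nn_integral_lebesgue_on_eq_lborel:
  fixes f :: "real^'n \<Rightarrow> 'b::real_normed_vector"
  assumes U: "U \<in> sets lebesgue" and vanish: "\<And>x. x \<notin> U \<Longrightarrow> f x = 0"
  shows "(\<integral>\<^sup>+x. ennreal ((norm (f x))\<^sup>2) \<partial>lebesgue_on U) = (\<integral>\<^sup>+x. ennreal ((norm (f x))\<^sup>2) \<partial>lborel)"
proof -
  have "(\<integral>\<^sup>+x. ennreal ((norm (f x))\<^sup>2) \<partial>lebesgue_on U)
     = (\<integral>\<^sup>+x. ennreal ((norm (f x))\<^sup>2) * indicator U x \<partial>lborel)"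
    using U by (simp add: nn_integral_restrict_space nn_integral_completion)
  also have "\<dots> = (\<integral>\<^sup>+x. ennreal ((norm (f x))\<^sup>2) \<partial>lborel)"
    by (rule nn_integral_cong) (auto simp: indicator_def vanish)
  finally show ?thesis .
qed

lemma C1c_test_nn_integral_jacobian_finite:
  assumes T: "C1c_test U \<phi> J" and U: "U \<in> sets lebesgue"
  shows "(\<integral>\<^sup>+x. ennreal ((norm (J x))\<^sup>2) \<partial>lebesgue_on U) < \<infinity>"
proof -
  obtain K where K: "compact K" "K \<subseteq> U" and J0: "\<And>x. x \<notin> K \<Longrightarrow> J x = 0"
    using C1c_test_support[OF T] by metis
  obtain B where B: "\<And>x. x \<in> K \<Longrightarrow> norm (J x) \<le> B"
    using compact_imp_bounded[OF compact_continuous_image[OF continuous_on_subset[OF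
          C1c_test_continuous(2)[OF T]] K(1)]]
    by (auto simp: bounded_iff)
  have [measurable]: "K \<in> sets borel" using K(1) by (simp add: borel_compact)
  have "(\<integral>\<^sup>+x. ennreal ((norm (J x))\<^sup>2) \<partial>lebesgue_on U) = (\<integral>\<^sup>+x. ennreal ((norm (J x))\<^sup>2) \<partial>lborel)"
    using K(2) J0 by (intro nn_integral_lebesgue_on_eq_lborel[OF U]) auto
  also have "\<dots> \<le> (\<integral>\<^sup>+x. ennreal (B\<^sup>2) * indicator K x \<partial>lborel)"
    using B J0 by (intro nn_integral_mono) (auto intro!: ennreal_leI power_mono simp: indicator_def)
  also have "\<dots> = ennreal (B\<^sup>2) * emeasure lborel K" by (simp add: nn_integral_cmult_indicator)
  also have "\<dots> < \<infinity>" using emeasure_compact_finite[OF K(1)] by (simp add: ennreal_mult_less_top)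
  finally show ?thesis .
qed

lemma poincare_C1c_test_periodic_cells:
  fixes a b p :: "real^'n"
  assumes T: "C1c_test U \<phi> J" and U: "U \<in> sets lebesgue"
    and h: "0 < h" and a: "\<And>i. 0 \<le> a$i" and ab: "\<And>i. a$i < b$i" and b: "\<And>i. b$i \<le> p$i"
    and holes: "\<And>l. cellset h l p (cbox a b) \<inter> U = {}"
  shows "(\<integral>\<^sup>+x. ennreal ((norm (\<phi> x))\<^sup>2) \<partial>lebesgue_on U)
     \<le> ennreal (periodic_poincare_constant p a b * h\<^sup>2) * (\<integral>\<^sup>+x. ennreal ((norm (J x))\<^sup>2) \<partial>lebesgue_on U)"
proof -
  obtain K where K: "K \<subseteq> U" and \<phi>0: "\<And>x. x \<notin> K \<Longrightarrow> \<phi> x = 0" and J0: "\<And>x. x \<notin> K \<Longrightarrow> J x = 0"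
    using C1c_test_support[OF T] by metis
  have deriv: "\<And>x. (\<phi> has_derivative (\<lambda>h. J x *v h)) (at x)"
    using T unfolding C1c_test_def by blast
  have "(\<integral>\<^sup>+x. ennreal ((norm (\<phi> x))\<^sup>2) \<partial>lborel)
     \<le> ennreal (periodic_poincare_constant p a b * h\<^sup>2) * (\<integral>\<^sup>+x. ennreal ((norm (J x))\<^sup>2) \<partial>lborel)"
  proof (rule poincare_vanishing_on_periodic_cells[OF deriv C1c_test_continuous(2)[OF T] h a ab b])
    show "\<phi> y = 0" if "y \<in> cellset h l p (cbox a b)" for l y
      using holes[of l] that K \<phi>0 by blast
  qed
  moreover have "\<And>x. x \<notin> U \<Longrightarrow> \<phi> x = 0" "\<And>x. x \<notin> U \<Longrightarrow> J x = 0" using K \<phi>0 J0 by auto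
  ultimately show ?thesis by (simp add: nn_integral_lebesgue_on_eq_lborel[OF U])
qed

lemma norm_square_le_triangle:
  fixes u w :: "'a::real_normed_vector"
  shows "ennreal ((norm u)\<^sup>2) \<le> 2 * ennreal ((norm w)\<^sup>2) + 2 * ennreal ((norm (w - u))\<^sup>2)"
proof -
  have "norm u \<le> norm w + norm (w - u)" using norm_triangle_sub[of u w] by (simp add: norm_minus_commute)
  then have "(norm u)\<^sup>2 \<le> (norm w + norm (w - u))\<^sup>2" by (intro power_mono) auto
  also have "\<dots> \<le> 2 * (norm w)\<^sup>2 + 2 * (norm (w - u))\<^sup>2"
    using sum_squares_bound[of "norm w" "norm (w - u)"] by (simp add: power2_eq_square algebra_simps)
  finally show ?thesis
    by (simp add: ennreal_leI flip: ennreal_plus ennreal_mult' ennreal_numeral)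
qed

lemma nn_integral_norm_square_le_triangle:
  fixes f g :: "'b \<Rightarrow> 'a::euclidean_space"
  assumes [measurable]: "f \<in> borel_measurable M" "g \<in> borel_measurable M"
  shows "(\<integral>\<^sup>+x. ennreal ((norm (g x))\<^sup>2) \<partial>M)
    \<le> 2 * (\<integral>\<^sup>+x. ennreal ((norm (f x))\<^sup>2) \<partial>M) + 2 * (\<integral>\<^sup>+x. ennreal ((norm (f x - g x))\<^sup>2) \<partial>M)"
proof -
  have "(\<integral>\<^sup>+x. ennreal ((norm (g x))\<^sup>2) \<partial>M)
      \<le> (\<integral>\<^sup>+x. 2 * ennreal ((norm (f x))\<^sup>2) + 2 * ennreal ((norm (f x - g x))\<^sup>2) \<partial>M)"
    by (intro nn_integral_mono norm_square_le_triangle)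
  also have "\<dots> = 2 * (\<integral>\<^sup>+x. ennreal ((norm (f x))\<^sup>2) \<partial>M) + 2 * (\<integral>\<^sup>+x. ennreal ((norm (f x - g x))\<^sup>2) \<partial>M)"
    by (simp add: nn_integral_add nn_integral_cmult)
  finally show ?thesis .
qed

lemma H01_nn_integral_gradient_finite:
  assumes U: "U \<in> sets lebesgue" and H: "H01 U v G"
  shows "(\<integral>\<^sup>+x. ennreal ((norm (G x))\<^sup>2) \<partial>lebesgue_on U) < \<infinity>"
proof -
  obtain \<phi> J where T: "\<And>k. C1c_test U (\<phi> k) (J k)"
    and G_lim: "(\<lambda>k. \<integral>\<^sup>+ x. ennreal ((norm (J k x - G x))\<^sup>2) \<partial>lebesgue_on U) \<longlonglongrightarrow> 0"
    using H unfolding H01_def by blast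
  have [measurable]: "G \<in> borel_measurable (lebesgue_on U)" using H unfolding H01_def by blast
  obtain k where "(\<integral>\<^sup>+ x. ennreal ((norm (J k x - G x))\<^sup>2) \<partial>lebesgue_on U) < 1"
    using order_tendstoD(2)[OF G_lim, of 1] by (auto dest: eventually_happens)
  then have "(\<integral>\<^sup>+ x. ennreal ((norm (J k x - G x))\<^sup>2) \<partial>lebesgue_on U) < \<infinity>"
    by (auto simp: less_top[symmetric])
  moreover have "(\<integral>\<^sup>+x. ennreal ((norm (J k x))\<^sup>2) \<partial>lebesgue_on U) < \<infinity>"
    by (rule C1c_test_nn_integral_jacobian_finite[OF T U])
  moreover have "(\<integral>\<^sup>+x. ennreal ((norm (G x))\<^sup>2) \<partial>lebesgue_on U)
      \<le> 2 * (\<integral>\<^sup>+x. ennreal ((norm (J k x))\<^sup>2) \<partial>lebesgue_on U)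
        + 2 * (\<integral>\<^sup>+ x. ennreal ((norm (J k x - G x))\<^sup>2) \<partial>lebesgue_on U)"
    using C1c_test_measurable[OF T U] by (intro nn_integral_norm_square_le_triangle) auto
  ultimately show ?thesis by (simp add: ennreal_mult_less_top order.strict_trans1)
qed

lemma H01_nn_integral_le:
  assumes U: "U \<in> sets lebesgue" and c: "0 \<le> c"
    and poincare: "\<And>\<phi> J. C1c_test U \<phi> J \<Longrightarrow>
      (\<integral>\<^sup>+x. ennreal ((norm (\<phi> x))\<^sup>2) \<partial>lebesgue_on U) \<le> ennreal c * (\<integral>\<^sup>+x. ennreal ((norm (J x))\<^sup>2) \<partial>lebesgue_on U)"
    and H: "H01 U v G"
  shows "(\<integral>\<^sup>+x. ennreal ((norm (v x))\<^sup>2) \<partial>lebesgue_on U)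
    \<le> ennreal (4 * c) * (\<integral>\<^sup>+x. ennreal ((norm (G x))\<^sup>2) \<partial>lebesgue_on U)"
proof -
  obtain \<phi> J where T: "\<And>k. C1c_test U (\<phi> k) (J k)"
    and v_lim: "(\<lambda>k. \<integral>\<^sup>+ x. ennreal ((norm (\<phi> k x - v x))\<^sup>2) \<partial>lebesgue_on U) \<longlonglongrightarrow> 0"
    and G_lim: "(\<lambda>k. \<integral>\<^sup>+ x. ennreal ((norm (J k x - G x))\<^sup>2) \<partial>lebesgue_on U) \<longlonglongrightarrow> 0"
    using H unfolding H01_def by blast
  have [measurable]: "v \<in> borel_measurable (lebesgue_on U)" "G \<in> borel_measurable (lebesgue_on U)"
    using H unfolding H01_def by blast+
  have [measurable]: "\<phi> k \<in> borel_measurable (lebesgue_on U)" "J k \<in> borel_measurable (lebesgue_on U)" for k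
    using C1c_test_measurable[OF T U] by auto
  define Iv where "Iv = (\<integral>\<^sup>+x. ennreal ((norm (v x))\<^sup>2) \<partial>lebesgue_on U)"
  define IG where "IG = (\<integral>\<^sup>+x. ennreal ((norm (G x))\<^sup>2) \<partial>lebesgue_on U)"
  define IJ where "IJ k = (\<integral>\<^sup>+x. ennreal ((norm (J k x))\<^sup>2) \<partial>lebesgue_on U)" for k
  define e where "e k = (\<integral>\<^sup>+ x. ennreal ((norm (\<phi> k x - v x))\<^sup>2) \<partial>lebesgue_on U)" for k
  define d where "d k = (\<integral>\<^sup>+ x. ennreal ((norm (J k x - G x))\<^sup>2) \<partial>lebesgue_on U)" for k
  have IJ_le: "IJ k \<le> 2 * IG + 2 * d k" for k
    using nn_integral_norm_square_le_triangle[of G _ "J k"]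
    by (simp add: IJ_def IG_def d_def norm_minus_commute)
  have approx: "Iv \<le> ennreal (4 * c) * IG + (ennreal (4 * c) * d k + 2 * e k)" for k
  proof -
    have "Iv \<le> 2 * (\<integral>\<^sup>+x. ennreal ((norm (\<phi> k x))\<^sup>2) \<partial>lebesgue_on U) + 2 * e k"
      unfolding Iv_def e_def by (rule nn_integral_norm_square_le_triangle) measurable
    also have "\<dots> \<le> 2 * (ennreal c * IJ k) + 2 * e k"
      unfolding IJ_def by (intro add_mono mult_left_mono poincare T) auto
    also have "\<dots> \<le> 2 * (ennreal c * (2 * IG + 2 * d k)) + 2 * e k"
      by (intro add_mono mult_left_mono IJ_le) auto
    also have "\<dots> = ennreal (4 * c) * IG + (ennreal (4 * c) * d k + 2 * e k)"
      using c by (simp add: ennreal_mult algebra_simps)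
    finally show ?thesis .
  qed
  have "(\<lambda>k. ennreal (4 * c) * IG + (ennreal (4 * c) * d k + 2 * e k))
      \<longlonglongrightarrow> ennreal (4 * c) * IG + (ennreal (4 * c) * 0 + 2 * 0)"
    using v_lim G_lim unfolding d_def e_def by (intro tendsto_add tendsto_const ennreal_tendsto_cmult) auto
  then show ?thesis
    using LIMSEQ_le_const[of _ _ Iv] approx by (auto simp: Iv_def IG_def)
qed

lemma H01_L2norm_le:
  assumes U: "U \<in> sets lebesgue" and c: "0 \<le> c"
    and poincare: "\<And>\<phi> J. C1c_test U \<phi> J \<Longrightarrow>
      (\<integral>\<^sup>+x. ennreal ((norm (\<phi> x))\<^sup>2) \<partial>lebesgue_on U) \<le> ennreal c * (\<integral>\<^sup>+x. ennreal ((norm (J x))\<^sup>2) \<partial>lebesgue_on U)"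
    and H: "H01 U v G"
  shows "L2norm U v \<le> 2 * sqrt c * L2norm U G"
proof -
  define Iv where "Iv = (\<integral>\<^sup>+x. ennreal ((norm (v x))\<^sup>2) \<partial>lebesgue_on U)"
  define IG where "IG = (\<integral>\<^sup>+x. ennreal ((norm (G x))\<^sup>2) \<partial>lebesgue_on U)"
  \<comment> \<open>finiteness matters because \<open>enn2real \<infinity> = 0\<close>\<close>
  have "enn2real Iv \<le> enn2real (ennreal (4 * c) * IG)"
    using H01_nn_integral_le[OF U c poincare H] H01_nn_integral_gradient_finite[OF U H]
    unfolding Iv_def IG_def by (intro enn2real_mono) (simp_all add: ennreal_mult_less_top)
  also have "\<dots> = 4 * c * enn2real IG" using c by (simp add: enn2real_mult)
  finally have "sqrt (enn2real Iv) \<le> 2 * sqrt c * sqrt (enn2real IG)"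
    using c by (metis real_sqrt_le_mono real_sqrt_mult real_sqrt_four)
  moreover have "v \<in> borel_measurable (lebesgue_on U)" "G \<in> borel_measurable (lebesgue_on U)"
    using H unfolding H01_def by blast+
  ultimately show ?thesis
    unfolding L2norm_def Iv_def IG_def by (simp add: integral_eq_nn_integral)
qed

lemma cellset_compact: "compact A \<Longrightarrow> compact (cellset s k p A)"
  unfolding cellset_def by (intro compact_continuous_image continuous_intros)

lemma perforated_sets_lebesgue:
  assumes "open \<Omega>" "compact Ys" "compact Zs"
  shows "perforated \<Omega> y0 Ys z0 Zs \<epsilon> \<delta> \<in> sets lebesgue"
proof -
  have "(\<Union>k. cellset \<epsilon> k y0 Ys) \<in> sets borel" "(\<Union>l. cellset (\<epsilon> * \<delta>) l z0 Zs) \<in> sets borel"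
    using assms(2,3) by (auto intro!: sets.countable_UN intro: borel_compact cellset_compact)
  then show ?thesis
    using assms(1) unfolding perforated_def by simp
qed

lemma interior_obtain_cbox_cart:
  fixes K :: "(real^'n) set"
  assumes "interior K \<noteq> {}"
  obtains a b where "cbox a b \<subseteq> K" "\<And>i. a$i < b$i"
proof -
  obtain c where "c \<in> interior K" using assms by blast
  then obtain a b where ab: "cbox a b \<subseteq> interior K" "\<forall>i\<in>Basis. a \<bullet> i < b \<bullet> i"
    using open_contains_cbox[OF open_interior] by metis
  have "a$i < b$i" for i using ab(2)[rule_format, of "axis i 1"] by (simp add: cart_eq_inner_axis)
  with ab(1) interior_subset that show ?thesis by blast
qed

lemma closed_lipschitz_compact:
  "closed_lipschitz K \<Longrightarrow> K \<subseteq> box a b \<Longrightarrow> compact K"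
  unfolding closed_lipschitz_def by (meson bounded_box bounded_subset compact_eq_bounded_closed)

lemma perforated_L2norm_le:
  fixes a b :: "real^'n"
  assumes \<Omega>: "open \<Omega>" and Ys: "compact Ys" and Zs: "compact Zs" "cbox a b \<subseteq> Zs"
    and a: "\<And>i. 0 \<le> a$i" and ab: "\<And>i. a$i < b$i" and b: "\<And>i. b$i \<le> z0$i"
    and h: "0 < \<epsilon> * \<delta>" and H: "H01 (perforated \<Omega> y0 Ys z0 Zs \<epsilon> \<delta>) v G"
  shows "L2norm (perforated \<Omega> y0 Ys z0 Zs \<epsilon> \<delta>) v
    \<le> 2 * sqrt (periodic_poincare_constant z0 a b) * (\<epsilon> * \<delta>) * L2norm (perforated \<Omega> y0 Ys z0 Zs \<epsilon> \<delta>) G"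
proof -
  define U where "U = perforated \<Omega> y0 Ys z0 Zs \<epsilon> \<delta>"
  have U: "U \<in> sets lebesgue" unfolding U_def using \<Omega> Ys Zs(1) by (rule perforated_sets_lebesgue)
  have "cellset (\<epsilon> * \<delta>) l z0 (cbox a b) \<inter> U = {}" for l
    using Zs(2) unfolding U_def perforated_def cellset_def by blast
  moreover have "0 < periodic_poincare_constant z0 a b"
  proof (rule periodic_poincare_constant_pos)
    show "0 < z0$i" for i using a[of i] ab[of i] b[of i] by linarith
  qed (rule ab)
  ultimately have "L2norm U v \<le> 2 * sqrt (periodic_poincare_constant z0 a b * (\<epsilon> * \<delta>)\<^sup>2) * L2norm U G"
    using H[folded U_def] by (intro H01_L2norm_le[OF U] poincare_C1c_test_periodic_cells[OF _ U h a ab b]) auto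
  then show ?thesis using h by (simp add: U_def real_sqrt_mult mult_ac)
qed

theorem proposition3:
  fixes \<Omega> :: "(real^'n) set" and y0 z0 :: "real^'n" and Ys Zs :: "(real^'n) set"
    and \<delta> :: "real \<Rightarrow> real"
  assumes dim: "CARD('n) = 2 \<or> CARD('n) = 3"
    and \<Omega>: "bounded \<Omega>" "open \<Omega>" "lipschitz_boundary \<Omega>"
    and y0: "\<forall>i. 0 < y0 $ i" and z0: "\<forall>i. 0 < z0 $ i"
    and Ys: "Ys \<subseteq> box 0 y0" "closed_lipschitz Ys"
    and Zs: "Zs \<subseteq> box 0 z0" "closed_lipschitz Zs"
    and \<delta>: "\<forall>\<epsilon>. 0 < \<epsilon> \<and> \<epsilon> < 1 \<longrightarrow> 0 < \<delta> \<epsilon> \<and> \<delta> \<epsilon> < \<epsilon>"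
    and \<delta>0: "(\<delta> \<longlongrightarrow> 0) (at_right 0)"
  shows "\<exists>C>0. \<forall>\<epsilon>. 0 < \<epsilon> \<and> \<epsilon> < 1
           \<and> (\<exists>L. finite L \<and> cbox 0 y0 = (\<Union>l\<in>L. cellset (\<delta> \<epsilon>) l z0 (cbox 0 z0)))
           \<and> (\<exists>L. finite L \<and> Ys = (\<Union>l\<in>L. cellset (\<delta> \<epsilon>) l z0 (cbox 0 z0)))
           \<and> (\<exists>K. finite K \<and> closure \<Omega> = (\<Union>k\<in>K. cellset \<epsilon> k y0 (cbox 0 y0)))
         \<longrightarrow> (\<forall>v G. H01 (perforated \<Omega> y0 Ys z0 Zs \<epsilon> (\<delta> \<epsilon>)) v G \<longrightarrow>
               L2norm (perforated \<Omega> y0 Ys z0 Zs \<epsilon> (\<delta> \<epsilon>)) v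
                 \<le> C * \<epsilon> * \<delta> \<epsilon> * L2norm (perforated \<Omega> y0 Ys z0 Zs \<epsilon> (\<delta> \<epsilon>)) G)"
proof -
  have "interior Zs \<noteq> {}" using Zs(2) by (simp add: closed_lipschitz_def)
  then obtain a b where ab: "cbox a b \<subseteq> Zs" "\<And>i. a$i < b$i"
    by (rule interior_obtain_cbox_cart) blast
  then have "a \<in> cbox a b" "b \<in> cbox a b" by (auto simp: mem_box_cart less_imp_le)
  then have "a \<in> box 0 z0" "b \<in> box 0 z0" using ab(1) Zs(1) by auto
  then have a: "0 \<le> a$i" and b: "b$i \<le> z0$i" for i by (auto simp: mem_box_cart less_imp_le)
  have compact: "compact Ys" "compact Zs" using Ys Zs by (auto intro: closed_lipschitz_compact)
  define C where "C = 2 * sqrt (periodic_poincare_constant z0 a b)"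
  have "0 < C" unfolding C_def using z0 ab(2) by (simp add: periodic_poincare_constant_pos)
  moreover have "L2norm (perforated \<Omega> y0 Ys z0 Zs \<epsilon> (\<delta> \<epsilon>)) v
      \<le> C * \<epsilon> * \<delta> \<epsilon> * L2norm (perforated \<Omega> y0 Ys z0 Zs \<epsilon> (\<delta> \<epsilon>)) G"
    if "0 < \<epsilon>" "\<epsilon> < 1" "H01 (perforated \<Omega> y0 Ys z0 Zs \<epsilon> (\<delta> \<epsilon>)) v G" for \<epsilon> v G
    using perforated_L2norm_le[OF \<Omega>(2) compact ab(1) a ab(2) b] that \<delta>
    by (simp add: C_def mult.assoc)
  ultimately show ?thesis by blast
qed

end
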